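(* Let $p\geq1$ be an integer, $\tau>0$, and $w=(w_0,\dots,w_{p-1})$ with all $w_j>0$ and $\sum_{j=0}^{p-1}w_j=1$. Let $M_w:E\to E$ be the weighted moving average defined on $E=l^\infty(\mathbb{N})$ by $M_w(x)=y$ with $$y_n=\frac{\sum_{j=p-1-n}^{p-1}w_jx_{n-p+1+j}}{\sum_{j=p-1-n}^{p-1}w_j}\ (0\le n\le p-2),\qquad y_n=\sum_{j=0}^{p-1}w_jx_{n-p+1+j}\ (n\geq p-1).$$ Then for every polynomial $P=\sum_{k=0}^da_kX^k\in\mathbb{R}[X]$, $$lag(P(M_w))=lag(M_w)\sum_{k=0}^d k a_k=lag(M_w)\,P'(1).$$
   Context: Here $P(M_w)=\sum_k a_k M_w^k$ (with $M_w^0=\mathrm{id}$). For every $k$, $M_w^k(x)_n=\sum_{i_1,\dots,i_k=0}^{p-1}w_{i_1}\cdots w_{i_k}x_{n-k(p-1)+i_1+\cdots+i_k}$ for $n\ge k(p-1)$, so $P(M_w)$ acts, for all $n\geq d(p-1)$, as a fixed finite weighted sum of $x_{n-q+1},\dots,x_n$ with $q=d(p-1)+1$. Lag: if $M:E\to E$ is linear and there are an integer $q\ge1$ and reals $v_0,\dots,v_{q-1}$ such that $M(x)_n=\sum_{j=0}^{q-1}v_jx_{n-q+1+j}$ for all $x\in E$ and all $n\geq q-1$, then $lag(M)=\tau\sum_{j=0}^{q-1}v_j(q-1-j)$, where $\tau>0$ is the fixed time step between consecutive observations. *)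

theory Defs
  imports "HOL-Analysis.Analysis" "HOL-Computational_Algebra.Polynomial"
begin

text \<open>E = l-infinity(N): bounded real sequences. Operators are modelled as maps on all
  sequences nat => real; only their behaviour on bounded sequences matters.\<close>

definition in_E :: "(nat \<Rightarrow> real) \<Rightarrow> bool" where
  "in_E x \<longleftrightarrow> bounded (range x)"

definition wma :: "nat \<Rightarrow> (nat \<Rightarrow> real) \<Rightarrow> (nat \<Rightarrow> real) \<Rightarrow> (nat \<Rightarrow> real)" where
  "wma p w x = (\<lambda>n.
     if n + 2 \<le> p then
       (\<Sum>j=p-1-n..p-1. w j * x (n + j + 1 - p)) / (\<Sum>j=p-1-n..p-1. w j)
     else (\<Sum>j=0..p-1. w j * x (n + j + 1 - p)))"

definition poly_op :: "real poly \<Rightarrow> ((nat \<Rightarrow> real) \<Rightarrow> (nat \<Rightarrow> real)) \<Rightarrow> (nat \<Rightarrow> real) \<Rightarrow> (nat \<Rightarrow> real)" where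
  "poly_op P M x = (\<lambda>n. \<Sum>k\<le>degree P. coeff P k * (M ^^ k) x n)"

definition lag_repr :: "((nat \<Rightarrow> real) \<Rightarrow> (nat \<Rightarrow> real)) \<Rightarrow> nat \<Rightarrow> (nat \<Rightarrow> real) \<Rightarrow> bool" where
  "lag_repr M q v \<longleftrightarrow> q \<ge> 1 \<and>
     (\<forall>x. in_E x \<longrightarrow> (\<forall>n\<ge>q-1. M x n = (\<Sum>j<q. v j * x (n + 1 + j - q))))"

definition lag :: "real \<Rightarrow> ((nat \<Rightarrow> real) \<Rightarrow> (nat \<Rightarrow> real)) \<Rightarrow> real" where
  "lag \<tau> M = (let (q, v) = (SOME (q, v). lag_repr M q v) in
                \<tau> * (\<Sum>j<q. v j * real (q - 1 - j)))"

end

theory Submission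
  imports Defs
begin

text \<open>An operator that, from time K on, is a finite convolution
  \<open>(M x) n = \<Sum>d\<le>K. c\<^sub>d x (n - d)\<close> is described by its transfer polynomial
  \<open>C = \<Sum> c\<^sub>d X\<^sup>d\<close> in the delay operator X, and its lag is \<open>\<tau> C'(1)\<close>.
  Composition of such operators multiplies transfer polynomials, so \<open>P(M\<^sub>w)\<close> has
  transfer polynomial \<open>P \<circ> W\<close>, where W is that of \<open>M\<^sub>w\<close>. Since the weights sum to 1,
  \<open>W(1) = 1\<close>, and the chain rule gives \<open>(P \<circ> W)'(1) = P'(1) W'(1)\<close>.\<close>

lemma sum_coeff_atMost_extend:
  fixes C :: "'a :: comm_semiring_1 poly"
  assumes "degree C \<le> K" "K \<le> B"
  shows "(\<Sum>d\<le>B. coeff C d * f d) = (\<Sum>d\<le>K. coeff C d * f d)"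
  by (rule sum.mono_neutral_right) (use assms in \<open>auto simp: coeff_eq_0\<close>)

lemma sum_coeff_mult:
  fixes C :: "'a :: comm_semiring_1 poly"
  assumes "degree C \<le> K" "degree E \<le> L"
  shows "(\<Sum>i\<le>K. \<Sum>j\<le>L. coeff C i * coeff E j * f (i + j)) =
         (\<Sum>k\<le>K + L. coeff (C * E) k * f k)"
proof -
  let ?g = "\<lambda>(i, j). coeff C i * coeff E j * f (i + j)"
  have fin: "finite {(i::nat, j::nat). i + j \<le> K + L}"
    by (rule finite_subset[of _ "{..K + L} \<times> {..K + L}"]) auto
  have "(\<Sum>i\<le>K. \<Sum>j\<le>L. coeff C i * coeff E j * f (i + j)) = sum ?g ({..K} \<times> {..L})"
    by (simp add: sum.cartesian_product)
  also have "\<dots> = sum ?g {(i, j). i + j \<le> K + L}"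
  proof (rule sum.mono_neutral_left[OF fin])
    show "\<forall>ij \<in> {(i, j). i + j \<le> K + L} - {..K} \<times> {..L}. ?g ij = 0"
    proof
      fix ij assume "ij \<in> {(i, j). i + j \<le> K + L} - {..K} \<times> {..L}"
      then obtain i j where "ij = (i, j)" "K < i \<or> L < j" by force
      with assms show "?g ij = 0" by (auto simp: coeff_eq_0)
    qed
  qed auto
  also have "\<dots> = (\<Sum>k\<le>K + L. \<Sum>i\<le>k. coeff C i * coeff E (k - i) * f (i + (k - i)))"
    by (rule sum.triangle_reindex_eq)
  also have "\<dots> = (\<Sum>k\<le>K + L. coeff (C * E) k * f k)"
    by (simp add: coeff_mult sum_distrib_right)
  finally show ?thesis .
qed

lemma pcompose_eq_sum:
  "pcompose p q = (\<Sum>k\<le>degree p. smult (coeff p k) (q ^ k))"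
  by (simp add: pcompose_altdef poly_altdef degree_map_poly coeff_map_poly)

lemma poly_pderiv_one:
  fixes C :: "'a :: {comm_semiring_1, semiring_no_zero_divisors, semiring_char_0} poly"
  assumes "degree C \<le> K"
  shows "poly (pderiv C) 1 = (\<Sum>d\<le>K. of_nat d * coeff C d)"
proof -
  have "poly (pderiv C) 1 = (\<Sum>i\<le>K. coeff (pderiv C) i)"
    unfolding poly_altdef power_one mult_1_right
    by (rule sum.mono_neutral_left) (use assms in \<open>auto simp: coeff_eq_0 degree_pderiv\<close>)
  also have "\<dots> = (\<Sum>d\<le>Suc K. of_nat d * coeff C d)"
    by (simp add: coeff_pderiv sum.atMost_Suc_shift del: sum.atMost_Suc)
  also have "\<dots> = (\<Sum>d\<le>K. of_nat d * coeff C d)"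
    using assms by (simp add: coeff_eq_0)
  finally show ?thesis .
qed

text \<open>Only the outputs at times \<open>n \<ge> K\<close> are constrained; boundary values, such as the
  renormalised averages of \<open>wma\<close> for \<open>n < p - 1\<close>, are left free.\<close>

definition fir_filter :: "((nat \<Rightarrow> real) \<Rightarrow> nat \<Rightarrow> real) \<Rightarrow> nat \<Rightarrow> real poly \<Rightarrow> bool" where
  "fir_filter M K C \<longleftrightarrow> degree C \<le> K \<and>
     (\<forall>x n. K \<le> n \<longrightarrow> M x n = (\<Sum>d\<le>K. coeff C d * x (n - d)))"

lemma fir_filter_mono:
  assumes "fir_filter M K C" "K \<le> B"
  shows "fir_filter M B C"
  using assms sum_coeff_atMost_extend[of C K B] unfolding fir_filter_def by auto

lemma fir_filter_id: "fir_filter id 0 1"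
  unfolding fir_filter_def by simp

lemma fir_filter_comp:
  assumes M: "fir_filter M K C" and N: "fir_filter N L E"
  shows "fir_filter (M \<circ> N) (K + L) (C * E)"
  unfolding fir_filter_def
proof (intro conjI allI impI)
  have deg: "degree C \<le> K" "degree E \<le> L"
    using assms unfolding fir_filter_def by auto
  then show "degree (C * E) \<le> K + L"
    using degree_mult_le[of C E] by linarith
  fix x n assume n: "K + L \<le> n"
  have "(M \<circ> N) x n = (\<Sum>i\<le>K. coeff C i * N x (n - i))"
    using M n unfolding fir_filter_def by auto
  also have "\<dots> = (\<Sum>i\<le>K. \<Sum>j\<le>L. coeff C i * coeff E j * x (n - (i + j)))"
    using N n by (auto simp: fir_filter_def sum_distrib_left mult.assoc diff_diff_add intro!: sum.cong)
  also have "\<dots> = (\<Sum>k\<le>K + L. coeff (C * E) k * x (n - k))"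
    using sum_coeff_mult[OF deg] .
  finally show "(M \<circ> N) x n = (\<Sum>k\<le>K + L. coeff (C * E) k * x (n - k))" .
qed

lemma fir_filter_funpow:
  assumes "fir_filter M K C"
  shows "fir_filter (M ^^ k) (k * K) (C ^ k)"
proof (induction k)
  case 0
  then show ?case using fir_filter_id by (simp add: id_def)
next
  case (Suc k)
  then show ?case using fir_filter_comp[OF assms Suc.IH] by (simp add: o_def)
qed

lemma fir_filter_lincomb:
  assumes "\<And>k. k \<in> A \<Longrightarrow> fir_filter (M k) K (C k)" "finite A"
  shows "fir_filter (\<lambda>x n. \<Sum>k\<in>A. a k * M k x n) K (\<Sum>k\<in>A. smult (a k) (C k))"
  unfolding fir_filter_def
proof (intro conjI allI impI)
  show "degree (\<Sum>k\<in>A. smult (a k) (C k)) \<le> K"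
    using assms by (intro degree_sum_le) (auto simp: fir_filter_def intro: order_trans[OF degree_smult_le])
  fix x n assume n: "K \<le> n"
  have "(\<Sum>k\<in>A. a k * M k x n) = (\<Sum>k\<in>A. a k * (\<Sum>d\<le>K. coeff (C k) d * x (n - d)))"
    using assms(1) n by (auto simp: fir_filter_def intro!: sum.cong)
  then show "(\<Sum>k\<in>A. a k * M k x n) = (\<Sum>d\<le>K. coeff (\<Sum>k\<in>A. smult (a k) (C k)) d * x (n - d))"
    by (simp add: coeff_sum sum_distrib_left sum_distrib_right mult.assoc sum.swap[of _ A])
qed

lemma fir_filter_poly_op:
  assumes "fir_filter M K C"
  shows "fir_filter (poly_op P M) (degree P * K) (pcompose P C)"
  unfolding poly_op_def pcompose_eq_sum
  by (rule fir_filter_lincomb)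
     (auto intro: fir_filter_mono[OF fir_filter_funpow[OF assms]])

definition wma_poly :: "nat \<Rightarrow> (nat \<Rightarrow> real) \<Rightarrow> real poly" where
  "wma_poly p w = (\<Sum>d<p. monom (w (p - 1 - d)) d)"

lemma coeff_wma_poly: "coeff (wma_poly p w) d = (if d < p then w (p - 1 - d) else 0)"
  by (simp add: wma_poly_def coeff_sum coeff_monom)

lemma poly_wma_poly_one: "poly (wma_poly p w) 1 = (\<Sum>j<p. w j)"
  using sum.nat_diff_reindex[of "\<lambda>j. w j" p]
  by (simp add: wma_poly_def poly_sum poly_monom)

lemma fir_filter_wma:
  assumes "p \<ge> 1"
  shows "fir_filter (wma p w) (p - 1) (wma_poly p w)"
  unfolding fir_filter_def
proof (intro conjI allI impI)
  show "degree (wma_poly p w) \<le> p - 1"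
    by (rule degree_le) (auto simp: coeff_wma_poly)
  fix x n assume n: "p - 1 \<le> n"
  have "wma p w x n = (\<Sum>j=0..p-1. w j * x (n + j + 1 - p))"
    using assms n by (simp add: wma_def)
  also have "\<dots> = (\<Sum>d\<le>p-1. coeff (wma_poly p w) d * x (n - d))"
    by (rule sum.reindex_bij_witness[where i="\<lambda>d. p - 1 - d" and j="\<lambda>j. p - 1 - j"])
       (use assms n in \<open>auto simp: coeff_wma_poly\<close>)
  finally show "wma p w x n = (\<Sum>d\<le>p-1. coeff (wma_poly p w) d * x (n - d))" .
qed

lemma in_E_unit_impulse: "in_E (\<lambda>i. if i = m then 1 else 0)"
  unfolding in_E_def by (rule finite_imp_bounded) (simp add: image_def)

lemma fir_filter_unit_impulse:
  assumes "fir_filter M K C" "K \<le> n" "d \<le> n"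
  shows "M (\<lambda>i. if i = n - d then 1 else 0) n = coeff C d"
proof -
  have "M (\<lambda>i. if i = n - d then 1 else 0) n = (\<Sum>d'\<le>K. coeff C d' * (if n - d' = n - d then 1 else 0))"
    using assms by (simp add: fir_filter_def)
  also have "\<dots> = (\<Sum>d'\<le>K. if d' = d then coeff C d' else 0)"
    by (rule sum.cong) (use assms(2,3) in auto)
  also have "\<dots> = coeff C d"
    using assms(1) by (auto simp: fir_filter_def coeff_eq_0)
  finally show ?thesis .
qed

lemma lag_repr_unit_impulse:
  assumes "lag_repr M q v" "q - 1 \<le> n" "d \<le> n"
  shows "M (\<lambda>i. if i = n - d then 1 else 0) n = (if d < q then v (q - 1 - d) else 0)"
proof -
  have "q \<ge> 1" using assms(1) by (simp add: lag_repr_def)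
  then have "M (\<lambda>i. if i = n - d then 1 else 0) n = (\<Sum>j<q. if j = q - 1 - d \<and> d < q then v j else 0)"
    using assms in_E_unit_impulse by (auto simp: lag_repr_def intro!: sum.cong)
  then show ?thesis by (simp add: sum.If_cases)
qed

lemma fir_filter_lag_repr:
  assumes "fir_filter M K C"
  shows "lag_repr M (K + 1) (\<lambda>j. coeff C (K - j))"
  unfolding lag_repr_def
proof (intro conjI allI impI)
  fix x n assume n: "K + 1 - 1 \<le> n"
  have "M x n = (\<Sum>d\<le>K. coeff C d * x (n - d))"
    using assms n by (simp add: fir_filter_def)
  also have "\<dots> = (\<Sum>j<K + 1. coeff C (K - j) * x (n + 1 + j - (K + 1)))"
    by (rule sum.reindex_bij_witness[where i="\<lambda>d. K - d" and j="\<lambda>j. K - j"]) (use n in auto)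
  finally show "M x n = (\<Sum>j<K + 1. coeff C (K - j) * x (n + 1 + j - (K + 1)))" .
qed simp

text \<open>Unit impulses read off the coefficients from either representation, so the
  choice made by \<open>SOME\<close> in \<open>lag\<close> does not matter.\<close>

lemma lag_repr_moment_eq:
  assumes "fir_filter M K C" "lag_repr M q v"
  shows "(\<Sum>j<q. v j * real (q - 1 - j)) = poly (pderiv C) 1"
proof -
  define N where "N = K + q"
  have coeff_C: "coeff C d = (if d < q then v (q - 1 - d) else 0)" if "d \<le> N" for d
    using fir_filter_unit_impulse[OF assms(1), of N d] lag_repr_unit_impulse[OF assms(2), of N d] that
    by (simp add: N_def)
  have "degree C \<le> N"
    using assms(1) by (simp add: fir_filter_def N_def)
  then have "poly (pderiv C) 1 = (\<Sum>d\<le>N. real d * (if d < q then v (q - 1 - d) else 0))"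
    by (simp add: poly_pderiv_one coeff_C)
  also have "\<dots> = (\<Sum>d<q. real d * v (q - 1 - d))"
    by (rule sum.mono_neutral_cong_right) (auto simp: N_def)
  also have "\<dots> = (\<Sum>j<q. v j * real (q - 1 - j))"
    by (rule sum.reindex_bij_witness[where i="\<lambda>d. q - 1 - d" and j="\<lambda>j. q - 1 - j"]) auto
  finally show ?thesis by simp
qed

lemma lag_fir_filter:
  assumes "fir_filter M K C"
  shows "lag \<tau> M = \<tau> * poly (pderiv C) 1"
proof -
  obtain q v where qv: "(SOME (q, v). lag_repr M q v) = (q, v)" by force
  have "\<exists>qv. (\<lambda>(q, v). lag_repr M q v) qv"
    using fir_filter_lag_repr[OF assms] by blast
  then have "lag_repr M q v"
    using someI_ex[of "\<lambda>(q, v). lag_repr M q v"] qv by simp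
  then show ?thesis
    using lag_repr_moment_eq[OF assms] qv by (simp add: lag_def)
qed

theorem proposition4:
  fixes p :: nat and \<tau> :: real and w :: "nat \<Rightarrow> real" and P :: "real poly"
  assumes "p \<ge> 1" and "\<tau> > 0"
    and "\<forall>j<p. w j > 0" and "(\<Sum>j<p. w j) = 1"
  shows "lag \<tau> (poly_op P (wma p w)) = lag \<tau> (wma p w) * (\<Sum>k\<le>degree P. real k * coeff P k)
    \<and> lag \<tau> (poly_op P (wma p w)) = lag \<tau> (wma p w) * poly (pderiv P) 1"
proof -
  let ?W = "wma_poly p w"
  have wma_filter: "fir_filter (wma p w) (p - 1) ?W"
    using fir_filter_wma[OF assms(1)] .
  have "poly ?W 1 = 1"
    using assms(4) by (simp add: poly_wma_poly_one)
  then have "lag \<tau> (poly_op P (wma p w)) = \<tau> * (poly (pderiv P) 1 * poly (pderiv ?W) 1)"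
    using lag_fir_filter[OF fir_filter_poly_op[OF wma_filter]]
    by (simp add: pderiv_pcompose poly_pcompose)
  also have "\<dots> = lag \<tau> (wma p w) * poly (pderiv P) 1"
    by (simp add: lag_fir_filter[OF wma_filter])
  finally show ?thesis
    using poly_pderiv_one[of P "degree P"] by simp
qed

end
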